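(* Let $P$ be a Markovian kernel on a measurable space $(E,\mathcal{B})$, $S_n=\frac1n\sum_{k=0}^{n-1}P^k$, $R=\sum_{k=0}^\infty2^{-(k+1)}P^k$, and $\mathcal{B}_1^+$ the set of measurable $f$ with $0\le f\le1$. Assume Assumption C: (i) there exist $C\in\mathcal{B}$, $\phi:\mathcal{B}_1^+\to\mathbb{R}_+$ and $\gamma:E\to\mathbb{R}_+$ such that $Pf(x)\le\phi(f)+\gamma(x)$ for all $x\in C$ and $f\in\mathcal{B}_1^+$; (ii) there exists a finite positive measure $m$ on $E$ such that (ii.1) $\lim_{m\circ R(A)\to0}\phi(R1_A)=0$, and (ii.2) there exists $n_0>0$ with $\sup_{n\ge n_0}m(S_n(1_C(\gamma-1)))<0$. Then the measure $m\circ R$ is mean almost invariant for $P$.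
   Context: $m\circ R$ denotes the measure $A\mapsto m(R1_A)$. A finite positive measure $\mu$ is mean almost invariant for $P$ if there exist $\delta\in[0,1)$, a set function $\psi:\mathcal{B}\to\mathbb{R}_+$ with $\lim_{\mu(A)\to0}\psi(A)=0$, and $n_1$ such that $\mu(S_n1_A)\le\psi(A)+\delta\mu(E)$ for all $A\in\mathcal{B}$ and $n\ge n_1$. *)

theory Defs
  imports "HOL-Probability.Probability"
begin

text \<open>Integral of an extended-real function w.r.t. a (positive) measure, as
  positive part minus negative part (the convention used for functions bounded
  below, for which the negative part is finite).\<close>
definition eint :: "'a measure \<Rightarrow> ('a \<Rightarrow> ereal) \<Rightarrow> ereal" where
  "eint N f = enn2ereal (\<integral>\<^sup>+ y. e2ennreal (f y) \<partial>N)
             - enn2ereal (\<integral>\<^sup>+ y. e2ennreal (- f y) \<partial>N)"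

definition kop :: "('a \<Rightarrow> 'a measure) \<Rightarrow> ('a \<Rightarrow> ereal) \<Rightarrow> 'a \<Rightarrow> ereal" where
  "kop P f x = eint (P x) f"

definition kpow :: "('a \<Rightarrow> 'a measure) \<Rightarrow> nat \<Rightarrow> ('a \<Rightarrow> ereal) \<Rightarrow> 'a \<Rightarrow> ereal" where
  "kpow P k f = (kop P ^^ k) f"

definition Smean :: "('a \<Rightarrow> 'a measure) \<Rightarrow> nat \<Rightarrow> ('a \<Rightarrow> ereal) \<Rightarrow> 'a \<Rightarrow> ereal" where
  "Smean P n f x = (\<Sum>k<n. kpow P k f x) / ereal (real n)"

definition Rop :: "('a \<Rightarrow> 'a measure) \<Rightarrow> ('a \<Rightarrow> ereal) \<Rightarrow> 'a \<Rightarrow> ereal" where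
  "Rop P f x = (\<Sum>k. ereal ((1/2) ^ Suc k) * kpow P k f x)"

definition mR :: "'a measure \<Rightarrow> ('a \<Rightarrow> 'a measure) \<Rightarrow> 'a measure \<Rightarrow> 'a measure" where
  "mR M P m = measure_of (space M) (sets M)
      (\<lambda>A. e2ennreal (eint m (Rop P (indicator A))))"

definition B1plus :: "'a measure \<Rightarrow> ('a \<Rightarrow> real) set" where
  "B1plus M = {f. f \<in> borel_measurable M \<and> (\<forall>x\<in>space M. 0 \<le> f x \<and> f x \<le> 1)}"

definition mean_almost_invariant ::
    "'a measure \<Rightarrow> ('a \<Rightarrow> 'a measure) \<Rightarrow> 'a measure \<Rightarrow> bool" where
  "mean_almost_invariant M P \<mu> \<longleftrightarrow>
     finite_measure \<mu> \<and> sets \<mu> = sets M \<and>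
     (\<exists>\<delta> \<psi> n1. 0 \<le> \<delta> \<and> \<delta> < 1 \<and> (0::nat) < n1 \<and>
        (\<forall>A\<in>sets M. 0 \<le> \<psi> A) \<and>
        (\<forall>\<epsilon>>0. \<exists>\<eta>>0. \<forall>A\<in>sets M. measure \<mu> A < \<eta> \<longrightarrow> \<psi> A < \<epsilon>) \<and>
        (\<forall>A\<in>sets M. \<forall>n\<ge>n1.
           eint \<mu> (Smean P n (indicator A)) \<le> ereal (\<psi> A + \<delta> * measure \<mu> (space M))))"

end

theory Submission
  imports Defs
begin

text \<open>Write \<nu> = m \<circ> R. The resolvent R = \<Sum>_j 2^-(j+1) P^j satisfies 2R = I + PR, so
  integrating against m P^k gives 2 (m P^k R)(A) = (m P^k)(A) + (m P^k)(P R 1_A).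
  Assumption C(i) applied to f = R 1_A yields P R 1_A \<le> \<phi>(R 1_A) + 1 + 1_C (\<gamma> - 1), and averaging
  over k < n gives 2 \<nu>(S_n 1_A) \<le> m(E) (\<phi>(R 1_A) + 2) + m(S_n (1_C (\<gamma> - 1))).
  By (ii.2) the last term is at most some s < 0 for n \<ge> n0, which is mean almost invariance
  with \<psi>(A) = m(E) \<phi>(R 1_A) / 2 and \<delta> = 1 + s / (2 m(E)); (ii.1) makes \<psi> small on
  \<nu>-small sets. Functions are handled through their nonnegative parts because \<gamma> may be
  unbounded: only the negative part of 1_C (\<gamma> - 1) has a finite integral a priori.\<close>

section \<open>Integrals of extended-real functions\<close>

lemma eint_cong: "(\<And>y. y \<in> space N \<Longrightarrow> F y = G y) \<Longrightarrow> eint N F = eint N G"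
  unfolding eint_def by (simp cong: nn_integral_cong)

lemma eint_enn2ereal: "eint N (\<lambda>y. enn2ereal (f y)) = enn2ereal (\<integral>\<^sup>+ y. f y \<partial>N)"
  unfolding eint_def by (simp add: e2ennreal_neg zero_ennreal.rep_eq)

lemma eint_null_measure:
  assumes "emeasure N (space N) = 0"
  shows "eint N F = 0"
proof -
  have "(\<integral>\<^sup>+ y. f y \<partial>N) = 0" for f :: "'a \<Rightarrow> ennreal"
  proof -
    have "(\<integral>\<^sup>+ y. f y \<partial>N) \<le> (\<integral>\<^sup>+ y. top \<partial>N)" by (rule nn_integral_mono) simp
    also have "\<dots> = 0" using assms by simp
    finally show ?thesis by simp
  qed
  then show ?thesis by (simp add: eint_def zero_ennreal.rep_eq)
qed

lemma measure_space_pos_if_eint_neg: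
  assumes "finite_measure N" and "eint N F < 0"
  shows "0 < measure N (space N)"
proof -
  have "emeasure N (space N) \<noteq> 0"
  proof
    assume "emeasure N (space N) = 0"
    then have "eint N F = 0" by (rule eint_null_measure)
    with assms(2) show False by simp
  qed
  then show ?thesis
    using assms(1) measure_nonneg[of N "space N"]
    by (simp add: finite_measure.emeasure_eq_measure less_le)
qed

lemma ennreal_minus_add_neg_part:
  fixes F G :: ennreal
  assumes "G \<noteq> top"
  shows "(F - G) + G = F + e2ennreal (- (enn2ereal F - enn2ereal G))"
  using assms
proof (cases F; cases G)
  fix f g assume "F = ennreal f" "0 \<le> f" "G = ennreal g" "0 \<le> g"
  then show ?thesis
    by (cases "g \<le> f")
       (simp_all add: e2ennreal_neg ennreal_plus[symmetric] ennreal_minus ennreal_neg del: ennreal_plus)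
qed (auto simp: e2ennreal_neg)

lemma neg_part_enn2ereal_diff_le:
  fixes F G :: ennreal
  assumes "G \<noteq> top"
  shows "e2ennreal (- (enn2ereal F - enn2ereal G)) \<le> G"
  using assms
proof (cases F; cases G)
  fix f g assume "F = ennreal f" "0 \<le> f" "G = ennreal g" "0 \<le> g"
  then show ?thesis by (cases "g \<le> f") (simp_all add: e2ennreal_neg)
qed (auto simp: e2ennreal_neg)

lemma eint_enn2ereal_diff:
  assumes fin: "finite_measure N"
    and F: "F \<in> borel_measurable N" and G: "G \<in> borel_measurable N"
    and G_bounded: "\<And>x. x \<in> space N \<Longrightarrow> G x \<le> ennreal B"
  shows "eint N (\<lambda>x. enn2ereal (F x) - enn2ereal (G x))
       = enn2ereal (\<integral>\<^sup>+ x. F x \<partial>N) - enn2ereal (\<integral>\<^sup>+ x. G x \<partial>N)"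
proof -
  interpret finite_measure N by fact
  define pos where "pos x = F x - G x" for x
  define neg where "neg x = e2ennreal (- (enn2ereal (F x) - enn2ereal (G x)))" for x
  have [measurable]: "pos \<in> borel_measurable N" "neg \<in> borel_measurable N"
    unfolding pos_def neg_def using F G by measurable
  have G_fin: "x \<in> space N \<Longrightarrow> G x \<noteq> top" for x
    using G_bounded[of x] by (auto simp: top_unique)
  have "(\<integral>\<^sup>+ x. pos x + G x \<partial>N) = (\<integral>\<^sup>+ x. F x + neg x \<partial>N)"
    by (rule nn_integral_cong) (simp add: pos_def neg_def ennreal_minus_add_neg_part G_fin)
  then have eq: "(\<integral>\<^sup>+ x. pos x \<partial>N) + (\<integral>\<^sup>+ x. G x \<partial>N) = (\<integral>\<^sup>+ x. F x \<partial>N) + (\<integral>\<^sup>+ x. neg x \<partial>N)"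
    using F G by (simp add: nn_integral_add)
  have "(\<integral>\<^sup>+ x. G x \<partial>N) \<le> (\<integral>\<^sup>+ x. ennreal B \<partial>N)"
    by (rule nn_integral_mono) (rule G_bounded)
  also have "\<dots> < top"
    using emeasure_finite[of "space N"] by (simp add: ennreal_mult_eq_top_iff less_top[symmetric])
  finally obtain g where g: "(\<integral>\<^sup>+ x. G x \<partial>N) = ennreal g" "0 \<le> g"
    by (cases "\<integral>\<^sup>+ x. G x \<partial>N") auto
  have "(\<integral>\<^sup>+ x. neg x \<partial>N) \<le> (\<integral>\<^sup>+ x. G x \<partial>N)"
    by (rule nn_integral_mono) (simp add: neg_def neg_part_enn2ereal_diff_le G_fin)
  then obtain d where d: "(\<integral>\<^sup>+ x. neg x \<partial>N) = ennreal d" "0 \<le> d"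
    using g by (cases "\<integral>\<^sup>+ x. neg x \<partial>N") (auto simp: top_unique)
  have "enn2ereal (\<integral>\<^sup>+ x. pos x \<partial>N) + ereal g
      = enn2ereal (\<integral>\<^sup>+ x. F x \<partial>N) + ereal d"
    using arg_cong[OF eq, of enn2ereal] g d by (simp add: plus_ennreal.rep_eq)
  then have "enn2ereal (\<integral>\<^sup>+ x. pos x \<partial>N) - enn2ereal (\<integral>\<^sup>+ x. neg x \<partial>N)
      = enn2ereal (\<integral>\<^sup>+ x. F x \<partial>N) - enn2ereal (\<integral>\<^sup>+ x. G x \<partial>N)"
    using g d
    by (cases "enn2ereal (\<integral>\<^sup>+ x. pos x \<partial>N)"; cases "enn2ereal (\<integral>\<^sup>+ x. F x \<partial>N)") auto
  then show ?thesis by (simp add: eint_def pos_def neg_def)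
qed

lemma sum_enn2ereal_diff:
  assumes "finite I" "\<And>k. k \<in> I \<Longrightarrow> B k \<noteq> top"
  shows "(\<Sum>k\<in>I. enn2ereal (A k) - enn2ereal (B k))
       = enn2ereal (\<Sum>k\<in>I. A k) - enn2ereal (\<Sum>k\<in>I. B k)"
  using assms
proof (induction I rule: finite_induct)
  case empty then show ?case by (simp add: zero_ennreal.rep_eq)
next
  case (insert i I)
  obtain bs where bs: "enn2ereal (\<Sum>k\<in>I. B k) = ereal bs"
    using insert by (cases "enn2ereal (\<Sum>k\<in>I. B k)") (auto simp: ennreal_sum_eq_top)
  obtain bi where bi: "enn2ereal (B i) = ereal bi"
    using insert by (cases "enn2ereal (B i)") auto
  have "(\<Sum>k\<in>insert i I. enn2ereal (A k) - enn2ereal (B k))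
     = (enn2ereal (A i) - enn2ereal (B i)) + (enn2ereal (\<Sum>k\<in>I. A k) - enn2ereal (\<Sum>k\<in>I. B k))"
    using insert by simp
  also have "\<dots> = (enn2ereal (A i) + enn2ereal (\<Sum>k\<in>I. A k)) - (enn2ereal (B i) + enn2ereal (\<Sum>k\<in>I. B k))"
    using bs bi enn2ereal_nonneg[of "A i"] enn2ereal_nonneg[of "\<Sum>k\<in>I. A k"]
    by (cases "enn2ereal (A i)"; cases "enn2ereal (\<Sum>k\<in>I. A k)") auto
  finally show ?case using insert by (simp add: plus_ennreal.rep_eq)
qed

lemma enn2ereal_diff_divide:
  assumes "0 < r" "Y \<noteq> top"
  shows "(enn2ereal X - enn2ereal Y) / ereal r
       = enn2ereal (X * ennreal (1/r)) - enn2ereal (Y * ennreal (1/r))"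
proof -
  obtain y where y: "Y = ennreal y" "0 \<le> y" using assms(2) by (cases Y) auto
  show ?thesis
  proof (cases X)
    case (real x)
    then show ?thesis using y assms
      by (simp add: ennreal_mult'[symmetric] divide_ereal_def del: ennreal_mult')
         (simp add: divide_inverse left_diff_distrib)
  next
    case top
    then show ?thesis using y assms by (simp add: ennreal_mult_top divide_ereal_def)
  qed
qed

lemma enn2ereal_divide: "0 < r \<Longrightarrow> enn2ereal X / ereal r = enn2ereal (X * ennreal (1/r))"
  using enn2ereal_diff_divide[of r 0 X] by (simp add: zero_ennreal.rep_eq)

lemma ereal_minus_one_eq_pos_neg:
  "ereal r - 1 = enn2ereal (ennreal (r - 1)) - enn2ereal (ennreal (1 - r))"
  by (cases "1 \<le> r") (simp_all add: one_ereal_def ennreal_neg zero_ennreal.rep_eq)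

lemma indicator_ereal_eq: "(indicator A :: 'a \<Rightarrow> ereal) = (\<lambda>y. enn2ereal (indicator A y))"
  by (auto simp: fun_eq_iff indicator_def zero_ennreal.rep_eq one_ennreal.rep_eq)

lemma SUP_ereal_less_zero_bound:
  fixes f :: "'i \<Rightarrow> ereal"
  assumes "(SUP i\<in>I. f i) < 0"
  obtains s where "s < 0" "\<And>i. i \<in> I \<Longrightarrow> f i \<le> ereal s"
proof -
  obtain s where "s < 0" "(SUP i\<in>I. f i) \<le> ereal s"
    using assms by (cases "SUP i\<in>I. f i") (auto intro: that[of "-1"])
  then show ?thesis using that SUP_upper order_trans by metis
qed

section \<open>Weighted countable sums of measures\<close>

lemma suminf_swap_ennreal: "(\<Sum>i. \<Sum>j. f i j) = (\<Sum>j. \<Sum>i. (f i j :: ennreal))"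
proof -
  have "(\<Sum>i. \<Sum>j. f i j) = (\<Sum>i. \<integral>\<^sup>+ j. f i j \<partial>count_space UNIV)"
    by (simp add: nn_integral_count_space_nat)
  also have "\<dots> = (\<integral>\<^sup>+ j. (\<Sum>i. f i j) \<partial>count_space UNIV)"
    by (rule nn_integral_suminf[symmetric]) simp
  also have "\<dots> = (\<Sum>j. \<Sum>i. f i j)"
    by (simp add: nn_integral_count_space_nat)
  finally show ?thesis .
qed

lemma emeasure_measure_of_weighted_suminf:
  assumes sets_Q: "\<And>j. sets (Q j) = sets M" and A: "A \<in> sets M"
  shows "emeasure (measure_of (space M) (sets M) (\<lambda>A. \<Sum>j. w j * emeasure (Q j) A)) A
       = (\<Sum>j. w j * emeasure (Q j) A)"
proof (rule emeasure_measure_of_sigma[OF sets.sigma_algebra_axioms _ _ A])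
  show "positive (sets M) (\<lambda>A. \<Sum>j. w j * emeasure (Q j) A)"
    by (simp add: positive_def)
  show "countably_additive (sets M) (\<lambda>A. \<Sum>j. w j * emeasure (Q j) A)"
    unfolding countably_additive_def
  proof (intro allI impI)
    fix A :: "nat \<Rightarrow> 'a set"
    assume A: "range A \<subseteq> sets M" "disjoint_family A"
    have "(\<Sum>i. \<Sum>j. w j * emeasure (Q j) (A i)) = (\<Sum>j. \<Sum>i. w j * emeasure (Q j) (A i))"
      by (rule suminf_swap_ennreal)
    also have "\<dots> = (\<Sum>j. w j * emeasure (Q j) (\<Union>i. A i))"
      using suminf_emeasure[OF _ A(2)] A(1) sets_Q by simp
    finally show "(\<Sum>i. \<Sum>j. w j * emeasure (Q j) (A i)) = (\<Sum>j. w j * emeasure (Q j) (\<Union> (range A)))" .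
  qed
qed

lemma nn_integral_weighted_suminf_measure:
  assumes sets_N: "sets N = sets M" and sets_Q: "\<And>j. sets (Q j) = sets M"
    and emeasure_N: "\<And>A. A \<in> sets M \<Longrightarrow> emeasure N A = (\<Sum>j. w j * emeasure (Q j) A)"
    and f: "f \<in> borel_measurable M"
  shows "(\<integral>\<^sup>+ x. f x \<partial>N) = (\<Sum>j. w j * (\<integral>\<^sup>+ x. f x \<partial>Q j))"
  using f
proof (induction rule: borel_measurable_induct)
  note space_N = sets_eq_imp_space_eq[OF sets_N] and space_Q = sets_eq_imp_space_eq[OF sets_Q]
  note meas_N = measurable_cong_sets[OF sets_N refl] and meas_Q = measurable_cong_sets[OF sets_Q refl]
  {
    case (cong f g)
    have "(\<integral>\<^sup>+ x. f x \<partial>N) = (\<integral>\<^sup>+ x. g x \<partial>N)" "\<And>j. (\<integral>\<^sup>+ x. f x \<partial>Q j) = (\<integral>\<^sup>+ x. g x \<partial>Q j)"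
      by (intro nn_integral_cong; use cong space_N space_Q in auto)+
    then show ?case using cong by simp
  next
    case (set A)
    then show ?case using sets_N sets_Q by (simp add: emeasure_N)
  next
    case (mult u c)
    have "u \<in> borel_measurable N" "\<And>j. u \<in> borel_measurable (Q j)"
      unfolding meas_N meas_Q by (fact mult)+
    then have "(\<integral>\<^sup>+ x. c * u x \<partial>N) = (\<Sum>j. c * (w j * (\<integral>\<^sup>+ x. u x \<partial>Q j)))"
      and "\<And>j. (\<integral>\<^sup>+ x. c * u x \<partial>Q j) = c * (\<integral>\<^sup>+ x. u x \<partial>Q j)"
      using mult by (simp_all add: nn_integral_cmult)
    then show ?case by (simp add: mult_ac)
  next
    case (add u v)
    have meas: "u \<in> borel_measurable N" "v \<in> borel_measurable N"
      "\<And>j. u \<in> borel_measurable (Q j)" "\<And>j. v \<in> borel_measurable (Q j)"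
      unfolding meas_N meas_Q by (fact add)+
    have "(\<integral>\<^sup>+ x. v x + u x \<partial>N)
        = (\<Sum>j. w j * (\<integral>\<^sup>+ x. v x \<partial>Q j)) + (\<Sum>j. w j * (\<integral>\<^sup>+ x. u x \<partial>Q j))"
      using add meas by (simp add: nn_integral_add)
    also have "\<dots> = (\<Sum>j. w j * (\<integral>\<^sup>+ x. v x \<partial>Q j) + w j * (\<integral>\<^sup>+ x. u x \<partial>Q j))"
      by (rule suminf_add) simp_all
    also have "\<dots> = (\<Sum>j. w j * (\<integral>\<^sup>+ x. v x + u x \<partial>Q j))"
      using meas by (simp add: nn_integral_add distrib_left)
    finally show ?case .
  next
    case (seq U)
    have meas: "\<And>i. U i \<in> borel_measurable N" "\<And>i j. U i \<in> borel_measurable (Q j)"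
      unfolding meas_N meas_Q by (fact seq)+
    have "(\<integral>\<^sup>+ x. (SUP i. U i) x \<partial>N) = (SUP i. \<Sum>j. w j * (\<integral>\<^sup>+ x. U i x \<partial>Q j))"
      unfolding SUP_apply using nn_integral_monotone_convergence_SUP[OF \<open>incseq U\<close>] seq meas
      by simp
    also have "\<dots> = (\<Sum>j. SUP i. w j * (\<integral>\<^sup>+ x. U i x \<partial>Q j))"
      using \<open>incseq U\<close>
      by (intro ennreal_suminf_SUP_eq[symmetric])
         (auto simp: incseq_def le_fun_def intro!: mult_left_mono nn_integral_mono)
    also have "\<dots> = (\<Sum>j. w j * (\<integral>\<^sup>+ x. (SUP i. U i) x \<partial>Q j))"
      unfolding SUP_apply SUP_mult_left_ennreal[symmetric]
      using nn_integral_monotone_convergence_SUP[OF \<open>incseq U\<close>] meas by simp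
    finally show ?case .
  }
qed

section \<open>Markov kernels acting on nonnegative functions\<close>

definition kop_nn :: "('a \<Rightarrow> 'a measure) \<Rightarrow> ('a \<Rightarrow> ennreal) \<Rightarrow> 'a \<Rightarrow> ennreal" where
  "kop_nn P f x = (\<integral>\<^sup>+ y. f y \<partial>P x)"

definition kpow_nn :: "('a \<Rightarrow> 'a measure) \<Rightarrow> nat \<Rightarrow> ('a \<Rightarrow> ennreal) \<Rightarrow> 'a \<Rightarrow> ennreal" where
  "kpow_nn P k f = (kop_nn P ^^ k) f"

lemma kpow_nn_0 [simp]: "kpow_nn P 0 f = f"
  by (simp add: kpow_nn_def)

lemma kpow_nn_Suc: "kpow_nn P (Suc k) f = kop_nn P (kpow_nn P k f)"
  by (simp add: kpow_nn_def)

lemma kpow_nn_Suc': "kpow_nn P (Suc k) f = kpow_nn P k (kop_nn P f)"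
  by (simp add: kpow_nn_def funpow_Suc_right del: funpow.simps)

lemma kpow_nn_add: "kpow_nn P i (kpow_nn P j f) = kpow_nn P (i + j) f"
  by (simp add: kpow_nn_def funpow_add)

lemma kpow_Suc: "kpow P (Suc k) F = kop P (kpow P k F)"
  by (simp add: kpow_def)

lemma kop_enn2ereal: "kop P (\<lambda>y. enn2ereal (f y)) x = enn2ereal (kop_nn P f x)"
  unfolding kop_def kop_nn_def by (rule eint_enn2ereal)

lemma kpow_enn2ereal: "kpow P k (\<lambda>y. enn2ereal (f y)) = (\<lambda>y. enn2ereal (kpow_nn P k f y))"
  by (induction k) (simp_all add: kpow_def kpow_Suc kpow_nn_Suc kop_enn2ereal)

locale markov_kernel =
  fixes M :: "'a measure" and P :: "'a \<Rightarrow> 'a measure"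
  assumes markov: "P \<in> M \<rightarrow>\<^sub>M prob_algebra M"
begin

lemma prob_space_P: "x \<in> space M \<Longrightarrow> prob_space (P x)"
  and sets_P: "x \<in> space M \<Longrightarrow> sets (P x) = sets M"
  using measurable_space[OF markov] by (auto simp: space_prob_algebra)

lemma space_P: "x \<in> space M \<Longrightarrow> space (P x) = space M"
  using sets_P sets_eq_imp_space_eq by blast

lemma measurable_kop_nn [measurable]: "f \<in> borel_measurable M \<Longrightarrow> kop_nn P f \<in> borel_measurable M"
  unfolding kop_nn_def
  by (rule measurable_compose[OF measurable_prob_algebraD[OF markov]
        nn_integral_measurable_subprob_algebra])

lemma measurable_kpow_nn [measurable]: "f \<in> borel_measurable M \<Longrightarrow> kpow_nn P k f \<in> borel_measurable M"
  by (induction k) (auto simp: kpow_nn_Suc)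

lemma kop_nn_le_const:
  assumes "\<And>y. y \<in> space M \<Longrightarrow> f y \<le> c" and x: "x \<in> space M"
  shows "kop_nn P f x \<le> c"
proof -
  interpret prob_space "P x" using prob_space_P[OF x] .
  have "kop_nn P f x \<le> (\<integral>\<^sup>+ y. c \<partial>P x)"
    unfolding kop_nn_def by (rule nn_integral_mono) (use assms space_P[OF x] in auto)
  then show ?thesis by (simp add: emeasure_space_1)
qed

lemma kpow_nn_le_const: "(\<And>y. y \<in> space M \<Longrightarrow> f y \<le> c) \<Longrightarrow> x \<in> space M \<Longrightarrow> kpow_nn P k f x \<le> c"
  by (induction k arbitrary: x) (auto simp: kpow_nn_Suc intro!: kop_nn_le_const)

lemma kop_nn_const:
  assumes "\<And>y. y \<in> space M \<Longrightarrow> f y = c" and x: "x \<in> space M"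
  shows "kop_nn P f x = c"
proof -
  interpret prob_space "P x" using prob_space_P[OF x] .
  have "kop_nn P f x = (\<integral>\<^sup>+ y. c \<partial>P x)"
    unfolding kop_nn_def by (rule nn_integral_cong) (use assms space_P[OF x] in auto)
  then show ?thesis by (simp add: emeasure_space_1)
qed

lemma kpow_nn_const: "(\<And>y. y \<in> space M \<Longrightarrow> f y = c) \<Longrightarrow> x \<in> space M \<Longrightarrow> kpow_nn P k f x = c"
  by (induction k arbitrary: x) (auto simp: kpow_nn_Suc intro!: kop_nn_const)

lemma kpow_enn2ereal_diff:
  assumes [measurable]: "f \<in> borel_measurable M" "g \<in> borel_measurable M"
    and g_le_1: "\<And>y. y \<in> space M \<Longrightarrow> g y \<le> 1"
    and x: "x \<in> space M"
  shows "kpow P k (\<lambda>y. enn2ereal (f y) - enn2ereal (g y)) x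
       = enn2ereal (kpow_nn P k f x) - enn2ereal (kpow_nn P k g x)"
  using x
proof (induction k arbitrary: x)
  case 0 then show ?case by (simp add: kpow_def)
next
  case (Suc k)
  have "kpow P (Suc k) (\<lambda>y. enn2ereal (f y) - enn2ereal (g y)) x
      = eint (P x) (\<lambda>y. enn2ereal (kpow_nn P k f y) - enn2ereal (kpow_nn P k g y))"
    unfolding kpow_Suc kop_def by (rule eint_cong) (simp add: space_P Suc)
  also have "\<dots> = enn2ereal (kpow_nn P (Suc k) f x) - enn2ereal (kpow_nn P (Suc k) g x)"
    unfolding kpow_nn_Suc kop_nn_def
  proof (rule eint_enn2ereal_diff[where B=1])
    show "finite_measure (P x)"
      using prob_space_P[OF Suc.prems] by (rule prob_space.finite_measure)
    show "kpow_nn P k f \<in> borel_measurable (P x)" "kpow_nn P k g \<in> borel_measurable (P x)"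
      unfolding measurable_cong_sets[OF sets_P[OF Suc.prems] refl] by measurable
    show "\<And>y. y \<in> space (P x) \<Longrightarrow> kpow_nn P k g y \<le> ennreal 1"
      using kpow_nn_le_const[OF g_le_1] space_P[OF Suc.prems] by simp
  qed
  finally show ?case .
qed


lemma Smean_enn2ereal_diff:
  assumes [measurable]: "f \<in> borel_measurable M" "g \<in> borel_measurable M"
    and g_le_1: "\<And>y. y \<in> space M \<Longrightarrow> g y \<le> 1" and n: "0 < n" and x: "x \<in> space M"
  shows "Smean P n (\<lambda>y. enn2ereal (f y) - enn2ereal (g y)) x
       = enn2ereal ((\<Sum>k<n. kpow_nn P k f x) * ennreal (1 / real n))
         - enn2ereal ((\<Sum>k<n. kpow_nn P k g x) * ennreal (1 / real n))"
proof -
  have fin: "kpow_nn P k g x \<noteq> top" for k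
    using kpow_nn_le_const[of g, OF g_le_1 x, of k] by (auto simp: top_unique)
  have "Smean P n (\<lambda>y. enn2ereal (f y) - enn2ereal (g y)) x
     = (enn2ereal (\<Sum>k<n. kpow_nn P k f x) - enn2ereal (\<Sum>k<n. kpow_nn P k g x)) / ereal (real n)"
    unfolding Smean_def using fin
    by (simp add: kpow_enn2ereal_diff[OF _ _ g_le_1 x] sum_enn2ereal_diff)
  then show ?thesis
    using n fin by (simp add: enn2ereal_diff_divide ennreal_sum_eq_top)
qed
end

section \<open>The resolvent and the iterated measures m P^k\<close>

definition mpow :: "('a \<Rightarrow> 'a measure) \<Rightarrow> 'a measure \<Rightarrow> nat \<Rightarrow> 'a measure" where
  "mpow P m k = ((\<lambda>N. bind N P) ^^ k) m"

definition geom_weight :: "nat \<Rightarrow> ennreal" where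
  "geom_weight j = ennreal ((1/2) ^ Suc j)"

definition Rop_nn :: "('a \<Rightarrow> 'a measure) \<Rightarrow> 'a set \<Rightarrow> 'a \<Rightarrow> ennreal" where
  "Rop_nn P A x = (\<Sum>j. geom_weight j * kpow_nn P j (indicator A) x)"

lemma suminf_geom_weight: "(\<Sum>j. geom_weight j) = 1"
proof -
  have "(\<lambda>j. (1/2::real) * (1/2) ^ j) sums ((1/2) * (1 / (1 - 1/2)))"
    by (intro sums_mult geometric_sums) simp
  then have sums: "(\<lambda>j. (1/2::real) ^ Suc j) sums 1"
    by simp
  have "(\<Sum>j. geom_weight j) = ennreal (\<Sum>j. (1/2::real) ^ Suc j)"
    unfolding geom_weight_def by (rule suminf_ennreal2) (auto intro: sums_summable[OF sums])
  then show ?thesis using sums_unique[OF sums] by simp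
qed

lemma geom_weight_suminf_shift:
  fixes f :: "nat \<Rightarrow> ennreal"
  shows "2 * (\<Sum>j. geom_weight j * f j) = f 0 + (\<Sum>j. geom_weight j * f (Suc j))"
proof -
  have double: "2 * geom_weight (Suc j) = geom_weight j" for j
    using ennreal_mult[of 2 "(1/2) ^ Suc (Suc j)"] by (simp add: geom_weight_def)
  have "2 * geom_weight 0 = 1"
    using ennreal_mult[of 2 "1/2"] by (simp add: geom_weight_def)
  moreover have "(\<Sum>j. geom_weight j * f j)
      = (\<Sum>j. geom_weight (Suc j) * f (Suc j)) + geom_weight 0 * f 0"
    using suminf_offset[of "\<lambda>j. geom_weight j * f j" 1] by simp
  ultimately show ?thesis
    by (simp add: distrib_left ennreal_suminf_cmult[symmetric] mult.assoc[symmetric] double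
        del: ennreal_suminf_cmult)
qed

lemma Rop_eq_enn2ereal: "Rop P (indicator A) = (\<lambda>x. enn2ereal (Rop_nn P A x))"
proof -
  have "ereal r * enn2ereal a = enn2ereal (ennreal r * a)" if "0 \<le> r" for r a
    using that by (simp add: times_ennreal.rep_eq)
  then show ?thesis
    unfolding Rop_def Rop_nn_def indicator_ereal_eq kpow_enn2ereal geom_weight_def by simp
qed

context markov_kernel
begin

lemma Rop_nn_le_1: "x \<in> space M \<Longrightarrow> Rop_nn P A x \<le> 1"
proof -
  assume x: "x \<in> space M"
  have "Rop_nn P A x \<le> (\<Sum>j. geom_weight j * 1)"
    unfolding Rop_nn_def
    by (intro suminf_le mult_left_mono kpow_nn_le_const x) (auto simp: indicator_def)
  then show ?thesis by (simp add: suminf_geom_weight)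
qed

lemma measurable_Rop_nn [measurable]:
  assumes [measurable]: "A \<in> sets M"
  shows "Rop_nn P A \<in> borel_measurable M"
  unfolding Rop_nn_def by measurable

lemma Rop_indicator_in_B1plus:
  assumes "A \<in> sets M"
  shows "(\<lambda>x. real_of_ereal (Rop P (indicator A) x)) \<in> B1plus M"
proof -
  have "(\<lambda>x. enn2real (Rop_nn P A x)) \<in> borel_measurable M"
    using assms by measurable
  moreover have "enn2real (Rop_nn P A x) \<le> 1" if "x \<in> space M" for x
    using enn2real_mono[OF Rop_nn_le_1[OF that, of A]] by simp
  ultimately show ?thesis
    by (simp add: B1plus_def Rop_eq_enn2ereal enn2real_def[symmetric])
qed

lemma kop_nn_Rop_nn_le:
  assumes A: "A \<in> sets M" and C: "C \<subseteq> space M"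
    and bound: "\<forall>x\<in>C. \<forall>f\<in>B1plus M. kop P (\<lambda>y. ereal (f y)) x \<le> ereal (\<phi> f + \<gamma> x)"
  shows "\<forall>x\<in>C. kop_nn P (Rop_nn P A) x
           \<le> ennreal (\<phi> (\<lambda>y. real_of_ereal (Rop P (indicator A) y)) + \<gamma> x)"
proof
  fix x assume "x \<in> C"
  then have x: "x \<in> space M" using C by blast
  have "kop P (\<lambda>y. ereal (real_of_ereal (Rop P (indicator A) y))) x
      = kop P (\<lambda>y. enn2ereal (Rop_nn P A y)) x"
    unfolding kop_def
  proof (rule eint_cong)
    fix y assume "y \<in> space (P x)"
    then have "Rop_nn P A y \<noteq> top"
      using Rop_nn_le_1[of y A] space_P[OF x] by (auto simp: top_unique)
    then show "ereal (real_of_ereal (Rop P (indicator A) y)) = enn2ereal (Rop_nn P A y)"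
      by (cases "Rop_nn P A y") (auto simp: Rop_eq_enn2ereal)
  qed
  then have "enn2ereal (kop_nn P (Rop_nn P A) x)
      \<le> ereal (\<phi> (\<lambda>y. real_of_ereal (Rop P (indicator A) y)) + \<gamma> x)"
    using bound[rule_format, OF \<open>x \<in> C\<close> Rop_indicator_in_B1plus[OF A]] by (simp add: kop_enn2ereal)
  then show "kop_nn P (Rop_nn P A) x
      \<le> ennreal (\<phi> (\<lambda>y. real_of_ereal (Rop P (indicator A) y)) + \<gamma> x)"
    by (metis e2ennreal_enn2ereal e2ennreal_ereal e2ennreal_mono)
qed

end

locale markov_with_initial = markov_kernel +
  fixes m :: "'a measure"
  assumes finite_m: "finite_measure m" and sets_m: "sets m = sets M"
    and m_nonzero: "0 < measure m (space M)"
begin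

lemma space_m: "space m = space M"
  using sets_m sets_eq_imp_space_eq by blast

lemma space_nonempty: "space M \<noteq> {}"
  using m_nonzero by auto

lemma sets_mpow: "sets (mpow P m k) = sets M"
proof (induction k)
  case 0 then show ?case by (simp add: mpow_def sets_m)
next
  case (Suc k)
  then have "space (mpow P m k) = space M"
    using sets_eq_imp_space_eq by blast
  then have "sets (mpow P m k \<bind> P) = sets M"
    using sets_P space_nonempty by (intro sets_bind) auto
  then show ?case by (simp add: mpow_def)
qed

lemma space_mpow: "space (mpow P m k) = space M"
  using sets_mpow sets_eq_imp_space_eq by blast

lemma measurable_mpow_iff: "mpow P m k \<rightarrow>\<^sub>M N = M \<rightarrow>\<^sub>M N"
  by (rule measurable_cong_sets[OF sets_mpow refl])

lemma nn_integral_mpow: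
  "f \<in> borel_measurable M \<Longrightarrow> (\<integral>\<^sup>+ x. f x \<partial>mpow P m k) = (\<integral>\<^sup>+ x. kpow_nn P k f x \<partial>m)"
proof (induction k arbitrary: f)
  case 0 then show ?case by (simp add: mpow_def)
next
  case (Suc k)
  have P: "P \<in> mpow P m k \<rightarrow>\<^sub>M subprob_algebra M"
    unfolding measurable_mpow_iff by (rule measurable_prob_algebraD[OF markov])
  have "mpow P m (Suc k) = mpow P m k \<bind> P"
    by (simp add: mpow_def)
  then have "(\<integral>\<^sup>+ x. f x \<partial>mpow P m (Suc k)) = (\<integral>\<^sup>+ x. kop_nn P f x \<partial>mpow P m k)"
    unfolding kop_nn_def by (simp add: nn_integral_bind[OF Suc.prems P])
  also have "\<dots> = (\<integral>\<^sup>+ x. kpow_nn P (Suc k) f x \<partial>m)"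
    using Suc by (simp add: kpow_nn_Suc')
  finally show ?case .
qed

lemma nn_integral_kpow_nn_mpow: "f \<in> borel_measurable M \<Longrightarrow>
   (\<integral>\<^sup>+ x. kpow_nn P j f x \<partial>mpow P m i) = (\<integral>\<^sup>+ x. f x \<partial>mpow P m (i + j))"
  by (simp add: nn_integral_mpow kpow_nn_add)

lemma emeasure_mpow_space: "emeasure (mpow P m k) (space M) = emeasure m (space M)"
proof -
  have "emeasure (mpow P m k) (space M) = (\<integral>\<^sup>+ x. indicator (space M) x \<partial>mpow P m k)"
    using sets_mpow by simp
  also have "\<dots> = (\<integral>\<^sup>+ x. kpow_nn P k (indicator (space M)) x \<partial>m)"
    by (simp add: nn_integral_mpow)
  also have "\<dots> = (\<integral>\<^sup>+ x. 1 \<partial>m)"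
    by (rule nn_integral_cong) (simp add: space_m kpow_nn_const)
  finally show ?thesis by (simp add: space_m)
qed

lemma nn_integral_mpow_le:
  assumes "\<And>y. y \<in> space M \<Longrightarrow> f y \<le> 1"
  shows "(\<integral>\<^sup>+ x. f x \<partial>mpow P m k) \<le> emeasure m (space M)"
proof -
  have "(\<integral>\<^sup>+ x. f x \<partial>mpow P m k) \<le> (\<integral>\<^sup>+ x. 1 \<partial>mpow P m k)"
    by (intro nn_integral_mono) (simp add: assms space_mpow)
  then show ?thesis by (simp add: space_mpow emeasure_mpow_space)
qed

lemma emeasure_mpow_le: "emeasure (mpow P m k) A \<le> emeasure m (space M)"
  using emeasure_space[of "mpow P m k" A] by (simp add: space_mpow emeasure_mpow_space)

lemma nn_integral_Rop_nn_mpow: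
  assumes [measurable]: "A \<in> sets M"
  shows "(\<integral>\<^sup>+ x. Rop_nn P A x \<partial>mpow P m i) = (\<Sum>j. geom_weight j * emeasure (mpow P m (i + j)) A)"
proof -
  have "(\<integral>\<^sup>+ x. Rop_nn P A x \<partial>mpow P m i)
      = (\<Sum>j. \<integral>\<^sup>+ x. geom_weight j * kpow_nn P j (indicator A) x \<partial>mpow P m i)"
    unfolding Rop_nn_def by (rule nn_integral_suminf) (simp add: measurable_mpow_iff)
  also have "\<dots> = (\<Sum>j. geom_weight j * emeasure (mpow P m (i + j)) A)"
    by (simp add: nn_integral_cmult measurable_mpow_iff nn_integral_kpow_nn_mpow sets_mpow)
  finally show ?thesis .
qed

lemma mR_eq_measure_of:
  "mR M P m = measure_of (space M) (sets M) (\<lambda>A. \<Sum>j. geom_weight j * emeasure (mpow P m j) A)"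
  unfolding mR_def
proof (rule measure_of_eq)
  show "sets M \<subseteq> Pow (space M)" by (rule sets.space_closed)
  fix A assume "A \<in> sigma_sets (space M) (sets M)"
  then have A: "A \<in> sets M" by (simp add: sets.sigma_sets_eq)
  have "e2ennreal (eint m (Rop P (indicator A))) = (\<integral>\<^sup>+ x. Rop_nn P A x \<partial>mpow P m 0)"
    by (simp add: Rop_eq_enn2ereal eint_enn2ereal mpow_def)
  also have "\<dots> = (\<Sum>j. geom_weight j * emeasure (mpow P m j) A)"
    using A by (simp add: nn_integral_Rop_nn_mpow)
  finally show "e2ennreal (eint m (Rop P (indicator A)))
      = (\<Sum>j. geom_weight j * emeasure (mpow P m j) A)" .
qed

lemma sets_mR: "sets (mR M P m) = sets M"
  and space_mR: "space (mR M P m) = space M"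
  by (simp_all add: mR_def)

lemma emeasure_mR:
  "A \<in> sets M \<Longrightarrow> emeasure (mR M P m) A = (\<Sum>j. geom_weight j * emeasure (mpow P m j) A)"
  unfolding mR_eq_measure_of by (rule emeasure_measure_of_weighted_suminf[OF sets_mpow])

lemma emeasure_mR_space: "emeasure (mR M P m) (space M) = emeasure m (space M)"
  by (simp add: emeasure_mR emeasure_mpow_space suminf_geom_weight)

lemma finite_measure_mR: "finite_measure (mR M P m)"
  using finite_measure.emeasure_finite[OF finite_m, of "space m"]
  by (intro finite_measureI) (simp add: space_mR emeasure_mR_space space_m)

lemma measure_mR_space: "measure (mR M P m) (space M) = measure m (space M)"
  by (simp add: measure_def emeasure_mR_space)

lemma nn_integral_mR:
  "f \<in> borel_measurable M
    \<Longrightarrow> (\<integral>\<^sup>+ x. f x \<partial>mR M P m) = (\<Sum>j. geom_weight j * (\<integral>\<^sup>+ x. f x \<partial>mpow P m j))"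
  by (rule nn_integral_weighted_suminf_measure[OF sets_mR sets_mpow emeasure_mR])

lemma eint_mR_Smean_indicator:
  assumes [measurable]: "A \<in> sets M" and n: "0 < n"
  shows "eint (mR M P m) (Smean P n (indicator A))
       = enn2ereal ((\<Sum>k<n. \<Sum>j. geom_weight j * emeasure (mpow P m (j + k)) A) * ennreal (1 / real n))"
proof -
  define c where "c = ennreal (1 / real n)"
  have inner: "(\<integral>\<^sup>+ x. (\<Sum>k<n. kpow_nn P k (indicator A) x) * c \<partial>mpow P m j)
      = c * (\<Sum>k<n. emeasure (mpow P m (j + k)) A)" for j
  proof -
    have "(\<integral>\<^sup>+ x. (\<Sum>k<n. kpow_nn P k (indicator A) x) * c \<partial>mpow P m j)
        = (\<Sum>k<n. \<integral>\<^sup>+ x. kpow_nn P k (indicator A) x \<partial>mpow P m j) * c"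
      by (subst nn_integral_multc, unfold measurable_mpow_iff, measurable)
         (subst nn_integral_sum, unfold measurable_mpow_iff, measurable)
    then show ?thesis
      using assms by (simp add: nn_integral_kpow_nn_mpow sets_mpow mult.commute)
  qed
  have "Smean P n (indicator A) = (\<lambda>x. enn2ereal ((\<Sum>k<n. kpow_nn P k (indicator A) x) * c))"
    using n unfolding Smean_def indicator_ereal_eq kpow_enn2ereal c_def
    by (simp add: fun_eq_iff enn2ereal_divide)
  then have "eint (mR M P m) (Smean P n (indicator A))
      = enn2ereal (\<integral>\<^sup>+ x. (\<Sum>k<n. kpow_nn P k (indicator A) x) * c \<partial>mR M P m)"
    by (simp add: eint_enn2ereal)
  also have "(\<integral>\<^sup>+ x. (\<Sum>k<n. kpow_nn P k (indicator A) x) * c \<partial>mR M P m)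
      = (\<Sum>j. geom_weight j * (c * (\<Sum>k<n. emeasure (mpow P m (j + k)) A)))"
    by (subst nn_integral_mR) (measurable, simp add: inner)
  also have "\<dots> = c * (\<Sum>j. \<Sum>k<n. geom_weight j * emeasure (mpow P m (j + k)) A)"
    by (subst ennreal_suminf_cmult[symmetric]) (simp add: sum_distrib_left mult_ac)
  also have "\<dots> = c * (\<Sum>k<n. \<Sum>j. geom_weight j * emeasure (mpow P m (j + k)) A)"
    by (subst suminf_sum) simp_all
  finally show ?thesis by (simp add: c_def mult.commute)
qed

text \<open>The resolvent equation 2R = I + PR integrated against m P^k.\<close>

lemma resolvent_identity:
  assumes [measurable]: "A \<in> sets M"
  shows "2 * (\<Sum>j. geom_weight j * emeasure (mpow P m (j + k)) A)
       = emeasure (mpow P m k) A + (\<integral>\<^sup>+ x. kop_nn P (Rop_nn P A) x \<partial>mpow P m k)"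
proof -
  have "(\<integral>\<^sup>+ x. kop_nn P (Rop_nn P A) x \<partial>mpow P m k) = (\<integral>\<^sup>+ x. Rop_nn P A x \<partial>mpow P m (Suc k))"
    using nn_integral_kpow_nn_mpow[OF measurable_Rop_nn[OF assms], of k 1] by (simp add: kpow_nn_Suc)
  also have "\<dots> = (\<Sum>j. geom_weight j * emeasure (mpow P m (Suc j + k)) A)"
    by (simp add: nn_integral_Rop_nn_mpow add.commute)
  finally show ?thesis
    using geom_weight_suminf_shift[of "\<lambda>j. emeasure (mpow P m (j + k)) A"] by simp
qed

end

section \<open>The drift estimate\<close>

text \<open>The bound P R 1_A \<le> \<phi> + 1 + 1_C (\<gamma> - 1) with the negative part of \<gamma> - 1 moved to
  the left, so that no subtraction occurs in ennreal.\<close>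

lemma drift_pointwise:
  fixes K :: ennreal and g ph :: real
  assumes ph: "0 \<le> ph" and g: "0 \<le> g"
    and on_C: "y \<in> C \<Longrightarrow> K \<le> ennreal (ph + g)" and K_le_1: "K \<le> 1"
  shows "K + indicator C y * ennreal (1 - g) \<le> ennreal (ph + 1) + indicator C y * ennreal (g - 1)"
proof (cases "y \<in> C")
  case True
  show ?thesis
  proof (cases "1 \<le> g")
    case True
    have "K \<le> ennreal (ph + 1 + (g - 1))" using on_C \<open>y \<in> C\<close> by simp
    also have "\<dots> = ennreal (ph + 1) + ennreal (g - 1)"
      using True ph by (subst ennreal_plus[symmetric]) auto
    finally show ?thesis using \<open>y \<in> C\<close> True by (simp add: ennreal_neg)
  next
    case False
    have "K + ennreal (1 - g) \<le> ennreal (ph + g) + ennreal (1 - g)"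
      using on_C[OF \<open>y \<in> C\<close>] by (rule add_right_mono)
    also have "\<dots> = ennreal (ph + 1)"
      using False ph g by (subst ennreal_plus[symmetric]) auto
    finally show ?thesis using \<open>y \<in> C\<close> False by (simp add: ennreal_neg)
  qed
next
  case False
  have "K \<le> ennreal (ph + 1)"
    using K_le_1 ph by (metis ennreal_1 ennreal_leI le_add_same_cancel2 order_trans)
  then show ?thesis using False by simp
qed

lemma average_drift_bound:
  fixes t a b \<alpha> :: ennreal and n :: nat and e K s :: real
  assumes n: "0 < n" and e: "0 \<le> e" and K: "0 \<le> K"
    and step: "2 * t + b \<le> \<alpha> + of_nat n * ennreal K + a"
    and \<alpha>: "\<alpha> \<le> of_nat n * ennreal e"
    and b: "b \<noteq> top"
    and avg: "enn2ereal (a * ennreal (1 / real n)) - enn2ereal (b * ennreal (1 / real n)) \<le> ereal s"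
  shows "enn2ereal (t * ennreal (1 / real n)) \<le> ereal ((e + K + s) / 2)"
proof -
  have scale: "enn2ereal (ennreal x * ennreal (1 / real n)) = ereal (x / real n)" if "0 \<le> x" for x
    using that n by (simp add: ennreal_mult[symmetric] del: ennreal_mult)
  have nat_mult: "of_nat n * ennreal x = ennreal (real n * x)" if "0 \<le> x" for x
    using that by (simp add: ennreal_of_nat_eq_real_of_nat ennreal_mult)
  obtain b' where b': "b = ennreal b'" "0 \<le> b'" using b by (cases b) auto
  obtain \<alpha>' where \<alpha>': "\<alpha> = ennreal \<alpha>'" "0 \<le> \<alpha>'"
    using \<alpha> e by (cases \<alpha>) (auto simp: nat_mult top_unique)
  have "a \<noteq> top"
  proof
    assume "a = top"
    then show False using avg n b' by (simp add: scale ennreal_mult_top)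
  qed
  then obtain a' where a': "a = ennreal a'" "0 \<le> a'" by (cases a) auto
  have "t \<noteq> top"
    using step \<alpha>' a' K by (auto simp: nat_mult top_unique ennreal_mult_eq_top_iff)
  then obtain t' where t': "t = ennreal t'" "0 \<le> t'" by (cases t) auto
  have "2 * t + b = ennreal (2 * t' + b')"
    using t' b' by (simp add: ennreal_plus ennreal_mult)
  moreover have "\<alpha> + of_nat n * ennreal K + a = ennreal (\<alpha>' + real n * K + a')"
    using \<alpha>' a' K by (simp add: nat_mult ennreal_plus)
  ultimately have "ennreal (2 * t' + b') \<le> ennreal (\<alpha>' + real n * K + a')"
    using step by (simp only:)
  then have "2 * t' + b' \<le> \<alpha>' + real n * K + a'"
    using \<alpha>' a' K by (subst (asm) ennreal_le_iff) auto
  moreover have "\<alpha>' \<le> real n * e"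
    using \<alpha> \<alpha>' e by (simp add: nat_mult ennreal_le_iff)
  moreover have "a' - b' \<le> real n * s"
    using avg a' b' n by (simp add: scale field_simps)
  ultimately have "t' / real n \<le> (e + K + s) / 2"
    using n by (simp add: field_simps)
  then show ?thesis using t' by (simp add: scale)
qed

context markov_with_initial
begin

lemma resolvent_drift_step:
  assumes [measurable]: "A \<in> sets M" "C \<in> sets M" "\<gamma> \<in> borel_measurable M"
    and \<gamma>_nonneg: "\<forall>x\<in>space M. 0 \<le> \<gamma> x" and ph: "0 \<le> ph"
    and drift: "\<forall>x\<in>C. kop_nn P (Rop_nn P A) x \<le> ennreal (ph + \<gamma> x)"
  shows "2 * (\<Sum>j. geom_weight j * emeasure (mpow P m (j + k)) A)
           + (\<integral>\<^sup>+ x. indicator C x * ennreal (1 - \<gamma> x) \<partial>mpow P m k)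
       \<le> emeasure (mpow P m k) A + ennreal (ph + 1) * emeasure m (space M)
           + (\<integral>\<^sup>+ x. indicator C x * ennreal (\<gamma> x - 1) \<partial>mpow P m k)"
proof -
  have "(\<integral>\<^sup>+ x. kop_nn P (Rop_nn P A) x + indicator C x * ennreal (1 - \<gamma> x) \<partial>mpow P m k)
      \<le> (\<integral>\<^sup>+ x. ennreal (ph + 1) + indicator C x * ennreal (\<gamma> x - 1) \<partial>mpow P m k)"
  proof (rule nn_integral_mono)
    fix y assume "y \<in> space (mpow P m k)"
    then have y: "y \<in> space M" by (simp add: space_mpow)
    show "kop_nn P (Rop_nn P A) y + indicator C y * ennreal (1 - \<gamma> y)
        \<le> ennreal (ph + 1) + indicator C y * ennreal (\<gamma> y - 1)"
      using ph \<gamma>_nonneg y drift kop_nn_le_const[OF Rop_nn_le_1 y]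
      by (intro drift_pointwise) auto
  qed
  then have "(\<integral>\<^sup>+ x. kop_nn P (Rop_nn P A) x \<partial>mpow P m k)
        + (\<integral>\<^sup>+ x. indicator C x * ennreal (1 - \<gamma> x) \<partial>mpow P m k)
      \<le> ennreal (ph + 1) * emeasure m (space M)
        + (\<integral>\<^sup>+ x. indicator C x * ennreal (\<gamma> x - 1) \<partial>mpow P m k)"
    by (simp add: nn_integral_add measurable_mpow_iff space_mpow emeasure_mpow_space)
  then show ?thesis
    unfolding resolvent_identity[OF assms(1)] by (simp add: add.assoc add_left_mono)
qed

lemma eint_Smean_enn2ereal_diff:
  assumes [measurable]: "f \<in> borel_measurable M" "g \<in> borel_measurable M"
    and g_le_1: "\<And>y. y \<in> space M \<Longrightarrow> g y \<le> 1" and n: "0 < n"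
  shows "eint m (Smean P n (\<lambda>y. enn2ereal (f y) - enn2ereal (g y)))
       = enn2ereal ((\<Sum>k<n. \<integral>\<^sup>+ x. f x \<partial>mpow P m k) * ennreal (1 / real n))
         - enn2ereal ((\<Sum>k<n. \<integral>\<^sup>+ x. g x \<partial>mpow P m k) * ennreal (1 / real n))"
proof -
  define c where "c = ennreal (1 / real n)"
  define F where "F x = (\<Sum>k<n. kpow_nn P k f x) * c" for x
  define G where "G x = (\<Sum>k<n. kpow_nn P k g x) * c" for x
  have [measurable]: "F \<in> borel_measurable M" "G \<in> borel_measurable M"
    unfolding F_def G_def by measurable
  have nn_integral_average: "(\<integral>\<^sup>+ x. (\<Sum>k<n. kpow_nn P k h x) * c \<partial>m) = (\<Sum>k<n. \<integral>\<^sup>+ x. h x \<partial>mpow P m k) * c"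
    if [measurable]: "h \<in> borel_measurable M" for h
    by (subst nn_integral_multc, unfold measurable_cong_sets[OF sets_m refl], measurable)
       (subst nn_integral_sum, unfold measurable_cong_sets[OF sets_m refl], measurable,
        simp add: nn_integral_mpow)
  have integrals: "(\<integral>\<^sup>+ x. F x \<partial>m) = (\<Sum>k<n. \<integral>\<^sup>+ x. f x \<partial>mpow P m k) * c"
    "(\<integral>\<^sup>+ x. G x \<partial>m) = (\<Sum>k<n. \<integral>\<^sup>+ x. g x \<partial>mpow P m k) * c"
    unfolding F_def G_def by (simp_all add: nn_integral_average)
  have "Smean P n (\<lambda>y. enn2ereal (f y) - enn2ereal (g y)) x = enn2ereal (F x) - enn2ereal (G x)"
    if "x \<in> space M" for x
    unfolding F_def G_def c_def using Smean_enn2ereal_diff[OF _ _ g_le_1 n that] by simp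
  then have "eint m (Smean P n (\<lambda>y. enn2ereal (f y) - enn2ereal (g y)))
      = eint m (\<lambda>x. enn2ereal (F x) - enn2ereal (G x))"
    by (intro eint_cong) (simp add: space_m)
  also have "\<dots> = enn2ereal (\<integral>\<^sup>+ x. F x \<partial>m) - enn2ereal (\<integral>\<^sup>+ x. G x \<partial>m)"
  proof (rule eint_enn2ereal_diff[OF finite_m, where B = 1])
    show "F \<in> borel_measurable m" "G \<in> borel_measurable m"
      unfolding measurable_cong_sets[OF sets_m refl] by measurable
    fix x assume "x \<in> space m"
    then have "G x \<le> (\<Sum>k<n. 1) * c"
      unfolding G_def
      by (intro mult_right_mono sum_mono kpow_nn_le_const[OF g_le_1]) (simp_all add: space_m)
    then show "G x \<le> ennreal 1"
      using n by (simp add: c_def ennreal_of_nat_eq_real_of_nat ennreal_mult[symmetric] del: ennreal_mult)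
  qed
  finally show ?thesis using integrals by (simp add: c_def)
qed

lemma eint_mR_Smean_le:
  assumes [measurable]: "A \<in> sets M" "C \<in> sets M" "\<gamma> \<in> borel_measurable M"
    and \<gamma>_nonneg: "\<forall>x\<in>space M. 0 \<le> \<gamma> x" and ph: "0 \<le> ph" and n: "0 < n"
    and drift: "\<forall>x\<in>C. kop_nn P (Rop_nn P A) x \<le> ennreal (ph + \<gamma> x)"
    and average: "eint m (Smean P n (\<lambda>x. indicator C x * (ereal (\<gamma> x) - 1))) \<le> ereal s"
  shows "eint (mR M P m) (Smean P n (indicator A))
       \<le> ereal (measure m (space M) / 2 * ph + measure m (space M) + s / 2)"
proof -
  define e where "e = measure m (space M)"
  have mass: "emeasure m (space M) = ennreal e" "0 \<le> e"
    using finite_measure.emeasure_eq_measure[OF finite_m] by (simp_all add: e_def)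
  define pos where "pos x = indicator C x * ennreal (\<gamma> x - 1)" for x
  define neg where "neg x = indicator C x * ennreal (1 - \<gamma> x)" for x
  have [measurable]: "pos \<in> borel_measurable M" "neg \<in> borel_measurable M"
    unfolding pos_def neg_def by measurable
  have neg_le_1: "neg y \<le> 1" if "y \<in> space M" for y
    using \<gamma>_nonneg that by (auto simp: neg_def indicator_def ennreal_le_1)
  have "(\<lambda>x. indicator C x * (ereal (\<gamma> x) - 1)) = (\<lambda>x. enn2ereal (pos x) - enn2ereal (neg x))"
    by (auto simp: fun_eq_iff pos_def neg_def indicator_def ereal_minus_one_eq_pos_neg zero_ennreal.rep_eq)
  then have avg: "enn2ereal ((\<Sum>k<n. \<integral>\<^sup>+ x. pos x \<partial>mpow P m k) * ennreal (1 / real n))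
      - enn2ereal ((\<Sum>k<n. \<integral>\<^sup>+ x. neg x \<partial>mpow P m k) * ennreal (1 / real n)) \<le> ereal s"
    using average eint_Smean_enn2ereal_diff[of pos neg n] neg_le_1 n by simp
  have "(\<Sum>k<n. 2 * (\<Sum>j. geom_weight j * emeasure (mpow P m (j + k)) A)
          + (\<integral>\<^sup>+ x. neg x \<partial>mpow P m k))
      \<le> (\<Sum>k<n. emeasure (mpow P m k) A + ennreal ((ph + 1) * e) + (\<integral>\<^sup>+ x. pos x \<partial>mpow P m k))"
    using resolvent_drift_step[OF assms(1-3) \<gamma>_nonneg ph drift] mass ph
    by (intro sum_mono) (simp add: pos_def neg_def ennreal_mult)
  then have step: "2 * (\<Sum>k<n. \<Sum>j. geom_weight j * emeasure (mpow P m (j + k)) A)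
        + (\<Sum>k<n. \<integral>\<^sup>+ x. neg x \<partial>mpow P m k)
      \<le> (\<Sum>k<n. emeasure (mpow P m k) A) + of_nat n * ennreal ((ph + 1) * e)
        + (\<Sum>k<n. \<integral>\<^sup>+ x. pos x \<partial>mpow P m k)"
    by (simp add: sum.distrib sum_distrib_left)
  have "(\<Sum>k<n. emeasure (mpow P m k) A) \<le> of_nat n * ennreal e"
    using sum_mono[of "{..<n}" "\<lambda>k. emeasure (mpow P m k) A" "\<lambda>_. ennreal e"]
    by (simp add: emeasure_mpow_le[unfolded mass(1)])
  moreover have "(\<Sum>k<n. \<integral>\<^sup>+ x. neg x \<partial>mpow P m k) \<noteq> top"
    using nn_integral_mpow_le[of neg, OF neg_le_1] mass(1)
    by (simp add: ennreal_sum_eq_top) (metis ennreal_neq_top top_unique)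
  ultimately have "enn2ereal ((\<Sum>k<n. \<Sum>j. geom_weight j * emeasure (mpow P m (j + k)) A)
        * ennreal (1 / real n)) \<le> ereal ((e + (ph + 1) * e + s) / 2)"
    using average_drift_bound[OF n mass(2) _ step _ _ avg] ph mass by simp
  then show ?thesis
    by (simp add: eint_mR_Smean_indicator[OF assms(1) n] e_def[symmetric] field_simps)
qed

end

section \<open>Mean almost invariance\<close>

lemma mean_almost_invariantI:
  fixes \<Phi> :: "'a set \<Rightarrow> real" and e s :: real
  assumes \<mu>: "finite_measure \<mu>" "sets \<mu> = sets M" and mass: "measure \<mu> (space M) = e"
    and e: "0 < e" and s: "s < 0" and n1: "0 < n1"
    and \<Phi>_nonneg: "\<forall>A\<in>sets M. 0 \<le> \<Phi> A"
    and \<Phi>_small: "\<forall>\<epsilon>>0. \<exists>\<eta>>0. \<forall>A\<in>sets M. measure \<mu> A < \<eta> \<longrightarrow> \<Phi> A < \<epsilon>"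
    and bound: "\<And>A n. A \<in> sets M \<Longrightarrow> n1 \<le> n
      \<Longrightarrow> eint \<mu> (Smean P n (indicator A)) \<le> ereal (e / 2 * \<Phi> A + e + s / 2)"
  shows "mean_almost_invariant M P \<mu>"
  unfolding mean_almost_invariant_def
  \<comment> \<open>s is capped below by -e so that \<delta> stays nonnegative\<close>
proof (intro conjI exI[of _ "1 + max s (- e) / (2 * e)"] exI[of _ "\<lambda>A. e / 2 * \<Phi> A"] exI[of _ n1])
  show "\<forall>\<epsilon>>0. \<exists>\<eta>>0. \<forall>A\<in>sets M. measure \<mu> A < \<eta> \<longrightarrow> e / 2 * \<Phi> A < \<epsilon>"
  proof (intro allI impI)
    fix \<epsilon> :: real assume "0 < \<epsilon>"
    then obtain \<eta> where "0 < \<eta>" "\<forall>A\<in>sets M. measure \<mu> A < \<eta> \<longrightarrow> \<Phi> A < 2 * \<epsilon> / e"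
      using \<Phi>_small e by (metis divide_pos_pos mult_pos_pos zero_less_numeral)
    then show "\<exists>\<eta>>0. \<forall>A\<in>sets M. measure \<mu> A < \<eta> \<longrightarrow> e / 2 * \<Phi> A < \<epsilon>"
      using e by (auto simp: field_simps)
  qed
  show "\<forall>A\<in>sets M. \<forall>n\<ge>n1. eint \<mu> (Smean P n (indicator A))
      \<le> ereal (e / 2 * \<Phi> A + (1 + max s (- e) / (2 * e)) * measure \<mu> (space M))"
  proof (intro ballI allI impI)
    fix A n assume "A \<in> sets M" "n1 \<le> n"
    then have "eint \<mu> (Smean P n (indicator A)) \<le> ereal (e / 2 * \<Phi> A + e + s / 2)"
      by (rule bound)
    also have "\<dots> \<le> ereal (e / 2 * \<Phi> A + (1 + max s (- e) / (2 * e)) * measure \<mu> (space M))"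
      using e by (simp add: mass field_simps)
    finally show "eint \<mu> (Smean P n (indicator A))
        \<le> ereal (e / 2 * \<Phi> A + (1 + max s (- e) / (2 * e)) * measure \<mu> (space M))" .
  qed
qed (use \<mu> e s n1 \<Phi>_nonneg in \<open>auto simp: field_simps\<close>)

theorem theorem3p9:
  fixes M :: "'a measure" and P :: "'a \<Rightarrow> 'a measure" and m :: "'a measure"
    and C :: "'a set" and \<phi> :: "('a \<Rightarrow> real) \<Rightarrow> real" and \<gamma> :: "'a \<Rightarrow> real"
    and n0 :: nat
  assumes markov: "P \<in> M \<rightarrow>\<^sub>M prob_algebra M"
    and C: "C \<in> sets M"
    and phi_nonneg: "\<forall>f\<in>B1plus M. 0 \<le> \<phi> f"
    and gamma_meas: "\<gamma> \<in> borel_measurable M"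
    and gamma_nonneg: "\<forall>x\<in>space M. 0 \<le> \<gamma> x"
    and i: "\<forall>x\<in>C. \<forall>f\<in>B1plus M. kop P (\<lambda>y. ereal (f y)) x \<le> ereal (\<phi> f + \<gamma> x)"
    and m: "finite_measure m" "sets m = sets M"
    and ii1: "\<forall>\<epsilon>>0. \<exists>\<eta>>0. \<forall>A\<in>sets M. measure (mR M P m) A < \<eta> \<longrightarrow>
                 \<phi> (\<lambda>x. real_of_ereal (Rop P (indicator A) x)) < \<epsilon>"
    and n0: "0 < n0"
    and ii2: "(SUP n\<in>{n0..}. eint m (Smean P n (\<lambda>x. indicator C x * (ereal (\<gamma> x) - 1)))) < 0"
  shows "mean_almost_invariant M P (mR M P m)"
proof -
  interpret markov_kernel M P by unfold_locales (rule markov)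
  obtain s where s: "s < 0"
    and average: "\<And>n. n \<in> {n0..} \<Longrightarrow> eint m (Smean P n (\<lambda>x. indicator C x * (ereal (\<gamma> x) - 1))) \<le> ereal s"
    using ii2 by (rule SUP_ereal_less_zero_bound) blast
  have "eint m (Smean P n0 (\<lambda>x. indicator C x * (ereal (\<gamma> x) - 1))) < 0"
    using average[of n0] s by (auto intro: le_less_trans)
  then have "0 < measure m (space M)"
    using measure_space_pos_if_eint_neg[OF m(1)] sets_eq_imp_space_eq[OF m(2)] by simp
  with markov m interpret markov_with_initial M P m
    by (simp add: markov_with_initial_def markov_with_initial_axioms_def markov_kernel_def)
  let ?\<Phi> = "\<lambda>A. \<phi> (\<lambda>x. real_of_ereal (Rop P (indicator A) x))"
  show ?thesis
  proof (rule mean_almost_invariantI[OF finite_measure_mR sets_mR measure_mR_space m_nonzero s n0])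
    show "\<forall>A\<in>sets M. 0 \<le> ?\<Phi> A"
      using phi_nonneg Rop_indicator_in_B1plus by blast
    show "eint (mR M P m) (Smean P n (indicator A))
        \<le> ereal (measure m (space M) / 2 * ?\<Phi> A + measure m (space M) + s / 2)"
      if A: "A \<in> sets M" and "n0 \<le> n" for A n
      using that n0 phi_nonneg Rop_indicator_in_B1plus[OF A]
      by (intro eint_mR_Smean_le[OF A C gamma_meas gamma_nonneg _ _
            kop_nn_Rop_nn_le[OF A sets.sets_into_space[OF C] i] average]) auto
  qed (rule ii1)
qed

end
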